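(* There is a constant $C$ such that for every $\ell\in\frac12\mathbb{N}$ and every $p\in\{-\ell,-\ell+1,\dots,\ell\}$, \[|c_p^\ell|\le C\min\left((1+\ell)^{-\frac14},\ \left||p|-\tfrac{\ell}{\sqrt2}\right|^{-\frac12}\right).\]
   Context: For $\ell\in\frac12\mathbb{N}=\{0,\frac12,1,\frac32,\dots\}$ and $p\in\{-\ell,-\ell+1,\dots,\ell\}$ (so $\ell\pm p$ are non-negative integers), $c_p^\ell=2^{-\ell}\int_0^{2\pi}(1+r^{-1}e^{-i\varphi})^{\ell-p}(1-re^{i\varphi})^{\ell+p}\frac{d\varphi}{2\pi}$, a quantity independent of $r>0$ (e.g. take $r=1$). By convention $0^{-1/2}=+\infty$, so the minimum is the first term when $|p|=\ell/\sqrt2$. *)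

theory Defs
  imports "HOL-Analysis.Analysis"
begin

text \<open>The integral defining c with a general radius r > 0; l - p and l + p are
  assumed to be natural numbers, so the exponents are the nats nat (floor (l-p)) etc.\<close>
definition c_coeff_r :: "real \<Rightarrow> real \<Rightarrow> real \<Rightarrow> complex" where
  "c_coeff_r r l p =
     complex_of_real (2 powr (- l)) *
     (integral {0..2*pi}
        (\<lambda>\<phi>. (1 + complex_of_real (inverse r) * cis (- \<phi>)) ^ nat \<lfloor>l - p\<rfloor> *
              (1 - complex_of_real r * cis \<phi>) ^ nat \<lfloor>l + p\<rfloor>)
      / complex_of_real (2 * pi))"

text \<open>c_p^l, taking r = 1 (the quantity is independent of r > 0).\<close>
definition c_coeff :: "real \<Rightarrow> real \<Rightarrow> complex" where
  "c_coeff l p = c_coeff_r 1 l p"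

text \<open>min((1+l)^(-1/4), ||p| - l/sqrt 2|^(-1/2)) with the convention 0^(-1/2) = +infinity.\<close>
definition bound_term :: "real \<Rightarrow> real \<Rightarrow> real" where
  "bound_term l p =
     (if \<bar>p\<bar> = l / sqrt 2 then (1 + l) powr (-1/4)
      else min ((1 + l) powr (-1/4)) (\<bar>\<bar>p\<bar> - l / sqrt 2\<bar> powr (-1/2)))"

end

theory Submission
  imports Defs "HOL-Real_Asymp.Real_Asymp"
begin

text \<open>Expanding both binomials under the integral, only the constant Fourier mode survives, so for
  every radius r > 0 the coefficient equals 2^(-l) * sum_j (-1)^j C(a,j) C(b,j), where a = l - p and
  b = l + p. If a or b is at most a tenth of a + b, this is bounded by 2^(-(a+b)/2) C(a+b, a), which
  decays exponentially. Otherwise choose r = sqrt(a/b): then 2^(-l) |integrand| <= exp(-K (cos \<phi> - v)^2)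
  with K = ab/(2(a+b)), comparable to l, and v = (a-b)/(2 sqrt(ab)). This Gaussian in cos \<phi> is
  dominated by two bumps 1/(1 + N sin^2((\<phi> - c)/2)) centred at +-arccos v, each of integral
  O(N^(-1/2)). Taking N = 2 sqrt K gives the bound (1+l)^(-1/4); taking
  N = K |1 - v^2| = |l^2 - 2p^2| / (4l) >= ||p| - l/sqrt 2| / 4 gives the other.\<close>

section \<open>The coefficient as an alternating binomial sum\<close>

lemma cis_multiple_has_integral:
  fixes m :: int
  shows "((\<lambda>t. cis (of_int m * t)) has_integral (if m = 0 then complex_of_real (2*pi) else 0)) {0..2*pi}"
proof (cases "m = 0")
  case True
  then show ?thesis using has_integral_const_real[of "1::complex" 0 "2*pi"]
    by (simp add: scaleR_conv_of_real)
next
  case False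
  define F where "F t = cis (of_int m * t) / (\<i> * of_int m)" for t
  have "(F has_vector_derivative cis (of_int m * t)) (at t within {0..2*pi})" for t
  proof -
    have "((\<lambda>t. cis (of_int m * t)) has_vector_derivative (of_int m *\<^sub>R (\<i> * cis (of_int m * t))))
        (at t within {0..2*pi})"
      unfolding has_vector_derivative_def
      by (auto intro!: derivative_eq_intros simp: scaleR_conv_of_real algebra_simps)
    then have "(F has_vector_derivative (of_int m *\<^sub>R (\<i> * cis (of_int m * t))) / (\<i> * of_int m))
        (at t within {0..2*pi})"
      unfolding F_def by (intro derivative_intros)
    then show ?thesis using False by (simp add: scaleR_conv_of_real)
  qed
  then have "((\<lambda>t. cis (of_int m * t)) has_integral (F (2*pi) - F 0)) {0..2*pi}"
    by (intro fundamental_theorem_of_calculus) auto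
  moreover have "cis (of_int m * (2*pi)) = 1"
    using cis_multiple_2pi[of "of_int m"] by (simp add: mult.commute mult.left_commute)
  ultimately show ?thesis using False by (simp add: F_def)
qed

lemma binomial_cis_expand:
  "(1 + z * cis \<theta>) ^ n = (\<Sum>j\<le>n. of_nat (n choose j) * z ^ j * cis (real j * \<theta>))"
  by (subst add.commute, subst binomial_ring) (simp add: power_mult_distrib mult.assoc flip: Complex.DeMoivre)

definition c_integrand :: "real \<Rightarrow> nat \<Rightarrow> nat \<Rightarrow> real \<Rightarrow> complex" where
  "c_integrand r a b \<phi> =
     (1 + complex_of_real (inverse r) * cis (- \<phi>)) ^ a * (1 - complex_of_real r * cis \<phi>) ^ b"

definition alt_binomial_sum :: "nat \<Rightarrow> nat \<Rightarrow> real" where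
  "alt_binomial_sum a b = (\<Sum>j\<le>a. (-1)^j * real (a choose j) * real (b choose j))"

lemma c_integrand_expand:
  "c_integrand r a b \<phi> =
     (\<Sum>j\<le>a. \<Sum>k\<le>b. (of_nat (a choose j) * of_real (inverse r) ^ j * of_nat (b choose k) * of_real (-r) ^ k)
        * cis (of_int (int k - int j) * \<phi>))"
proof -
  have "c_integrand r a b \<phi> =
      (1 + complex_of_real (inverse r) * cis (- \<phi>)) ^ a * (1 + complex_of_real (-r) * cis \<phi>) ^ b"
    by (simp add: c_integrand_def)
  also have "\<dots> = (\<Sum>j\<le>a. \<Sum>k\<le>b. (of_nat (a choose j) * of_real (inverse r) ^ j * cis (real j * - \<phi>)) *
      (of_nat (b choose k) * of_real (-r) ^ k * cis (real k * \<phi>)))"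
    unfolding binomial_cis_expand sum_product ..
  also have "\<dots> = (\<Sum>j\<le>a. \<Sum>k\<le>b. (of_nat (a choose j) * of_real (inverse r) ^ j * of_nat (b choose k) *
      of_real (-r) ^ k) * cis (of_int (int k - int j) * \<phi>))"
    by (intro sum.cong refl) (simp add: cis_mult algebra_simps)
  finally show ?thesis .
qed

lemma c_integrand_has_integral:
  assumes "r > 0"
  shows "(c_integrand r a b has_integral complex_of_real (2*pi * alt_binomial_sum a b)) {0..2*pi}"
proof -
  let ?c = "\<lambda>j k. of_nat (a choose j) * of_real (inverse r) ^ j * of_nat (b choose k) * of_real (-r) ^ k
              :: complex"
  have "((\<lambda>\<phi>. \<Sum>j\<le>a. \<Sum>k\<le>b. ?c j k * cis (of_int (int k - int j) * \<phi>)) has_integral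
      (\<Sum>j\<le>a. \<Sum>k\<le>b. ?c j k * (if int k - int j = 0 then complex_of_real (2*pi) else 0))) {0..2*pi}"
    by (intro has_integral_sum finite_atMost has_integral_mult_right cis_multiple_has_integral)
  also have "(\<Sum>j\<le>a. \<Sum>k\<le>b. ?c j k * (if int k - int j = 0 then complex_of_real (2*pi) else 0)) =
      (\<Sum>j\<le>a. if j \<le> b then ?c j j * complex_of_real (2*pi) else 0)"
    by (intro sum.cong refl) (simp add: if_distrib sum.delta' cong: if_cong)
  also have "\<dots> = complex_of_real (2*pi * alt_binomial_sum a b)"
  proof -
    have "of_real (inverse r) ^ j * of_real (-r) ^ j = ((-1)^j :: complex)" for j
      using assms by (simp flip: power_mult_distrib of_real_mult of_real_power)
    then show ?thesis
      unfolding alt_binomial_sum_def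
      by (auto simp: sum_distrib_left algebra_simps binomial_eq_0 intro!: sum.cong)
  qed
  finally show ?thesis unfolding c_integrand_expand[abs_def] .
qed

lemma c_coeff_r_eq:
  assumes "r > 0"
  shows "c_coeff_r r l p = complex_of_real (2 powr (-l) * alt_binomial_sum (nat \<lfloor>l-p\<rfloor>) (nat \<lfloor>l+p\<rfloor>))"
  using integral_unique[OF c_integrand_has_integral[OF assms]]
  unfolding c_coeff_r_def c_integrand_def[abs_def] by simp

lemma c_coeff_eq:
  "c_coeff l p = complex_of_real (2 powr (-l) * alt_binomial_sum (nat \<lfloor>l-p\<rfloor>) (nat \<lfloor>l+p\<rfloor>))"
  unfolding c_coeff_def by (rule c_coeff_r_eq) simp

lemma norm_c_coeff_le_integral:
  assumes r: "r > 0" and g: "g integrable_on {0..2*pi}"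
    and le: "\<And>\<phi>. \<phi> \<in> {0..2*pi} \<Longrightarrow>
      2 powr (-l) * cmod (c_integrand r (nat \<lfloor>l-p\<rfloor>) (nat \<lfloor>l+p\<rfloor>) \<phi>) \<le> g \<phi>"
  shows "cmod (c_coeff l p) \<le> integral {0..2*pi} g / (2*pi)"
proof -
  let ?f = "\<lambda>\<phi>. complex_of_real (2 powr (-l)) * c_integrand r (nat \<lfloor>l-p\<rfloor>) (nat \<lfloor>l+p\<rfloor>) \<phi>"
  have "c_coeff l p = c_coeff_r r l p"
    using c_coeff_eq c_coeff_r_eq[OF r] by simp
  also have "\<dots> = integral {0..2*pi} ?f / complex_of_real (2*pi)"
    unfolding c_coeff_r_def c_integrand_def[abs_def] by simp
  finally have eq: "c_coeff l p = integral {0..2*pi} ?f / complex_of_real (2*pi)" .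
  have "?f integrable_on {0..2*pi}"
    unfolding c_integrand_def by (intro integrable_continuous_interval continuous_intros)
  then have "norm (integral {0..2*pi} ?f) \<le> integral {0..2*pi} g"
    by (rule integral_norm_bound_integral[OF _ g]) (use le in \<open>auto simp: norm_mult\<close>)
  then show ?thesis unfolding eq by (simp add: norm_divide divide_right_mono)
qed

section \<open>A Gaussian majorant of the integrand\<close>

lemma ln_add_one_le_sub_square:
  fixes y M :: real
  assumes y: "-1 < y" "1 + y \<le> M" and M: "1 \<le> M"
  shows "ln (1 + y) \<le> y - y^2 / (2*M)"
proof -
  define h where "h t = t - t^2 / (2*M) - ln (1 + t)" for t
  have deriv: "DERIV h t :> t * (1 / (1 + t) - 1 / M)" if "-1 < t" for t
  proof -
    have t0: "0 < 1 + t" and M0: "0 < M" using that M by auto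
    \<comment> \<open>the right-hand side is the shape produced by \<open>derivative_eq_intros\<close>\<close>
    then have "t * (1 / (1 + t) - 1 / M) = 1 - real 2 * t ^ 1 / (2*M) - 1 / (1 + t)"
      by (simp add: field_simps)
    then show ?thesis
      unfolding h_def using t0 M0 by (auto intro!: derivative_eq_intros simp del: of_nat_numeral)
  qed
  have "h 0 \<le> h y" if "0 \<le> y"
  proof (rule DERIV_nonneg_imp_nondecreasing[OF that])
    fix t assume t: "0 \<le> t" "t \<le> y"
    have "1 / M \<le> 1 / (1 + t)" using t y by (intro divide_left_mono) auto
    then show "\<exists>d. DERIV h t :> d \<and> 0 \<le> d"
      using deriv[of t] t by (intro exI[of _ "t * (1 / (1 + t) - 1 / M)"]) auto
  qed
  moreover have "h 0 \<le> h y" if "y \<le> 0"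
  proof (rule DERIV_nonpos_imp_nonincreasing[OF that])
    fix t assume t: "y \<le> t" "t \<le> 0"
    have "1 / M \<le> 1 / (1 + t)" using t y M by (intro divide_left_mono) auto
    then show "\<exists>d. DERIV h t :> d \<and> d \<le> 0"
      using deriv[of t] t y
      by (intro exI[of _ "t * (1 / (1 + t) - 1 / M)"]) (auto simp: mult_nonpos_nonneg)
  qed
  ultimately have "h 0 \<le> h y" by linarith
  then show ?thesis by (simp add: h_def)
qed

lemma power_le_exp_sub_square:
  fixes y M :: real
  assumes y: "0 \<le> 1 + y" "1 + y \<le> M" and M: "1 \<le> M"
  shows "(1 + y) ^ k \<le> exp (real k * (y - y^2 / (2*M)))"
proof -
  have "1 + y \<le> exp (y - y^2 / (2*M))"
  proof (cases "1 + y = 0")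
    case False
    then have "ln (1 + y) \<le> y - y^2 / (2*M)" using y M by (intro ln_add_one_le_sub_square) auto
    then show ?thesis using False y by (metis exp_le_cancel_iff exp_ln_iff order_le_less)
  qed simp
  then have "(1 + y) ^ k \<le> exp (y - y^2 / (2*M)) ^ k" using y by (intro power_mono)
  then show ?thesis by (simp add: exp_of_nat_mult)
qed

lemma norm_one_add_cis_squared:
  "cmod (1 + complex_of_real \<rho> * cis \<theta>) ^ 2 = 1 + \<rho>^2 + 2 * \<rho> * cos \<theta>"
proof -
  have "cmod (1 + complex_of_real \<rho> * cis \<theta>) ^ 2 = (1 + \<rho> * cos \<theta>)^2 + (\<rho> * sin \<theta>)^2"
    by (simp add: cmod_power2)
  also have "\<dots> = 1 + \<rho>^2 * (sin \<theta>^2 + cos \<theta>^2) + 2 * \<rho> * cos \<theta>" by algebra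
  finally show ?thesis by simp
qed

lemma two_powr_neg_half_squared: "(2 powr (- (real n / 2)))^2 = 1 / 2^n"
  by (simp add: power2_eq_square powr_realpow powr_minus_divide flip: powr_add)

lemma c_integrand_norm_squared:
  fixes a b :: nat
  assumes "a \<ge> 1" "b \<ge> 1"
  defines "q \<equiv> sqrt (real a * real b)"
  shows "(2 powr (-((real a + real b) / 2)) * cmod (c_integrand (sqrt (real a / real b)) a b \<phi>))^2 =
    ((real a + real b + 2 * q * cos \<phi>) / (2 * real a)) ^ a *
    ((real a + real b - 2 * q * cos \<phi>) / (2 * real b)) ^ b"
proof -
  define r where "r = sqrt (real a / real b)"
  have a0: "real a > 0" and b0: "real b > 0" using assms by auto
  have qq: "q^2 = real a * real b" and q0: "q > 0" unfolding q_def using a0 b0 by simp_all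
  have r: "r = q / real b" "inverse r = q / real a"
    unfolding r_def q_def using a0 b0 by (simp_all add: real_sqrt_mult real_sqrt_divide field_simps)
  have N1: "cmod (1 + complex_of_real (inverse r) * cis (- \<phi>)) ^ 2 = (real a + real b + 2 * q * cos \<phi>) / real a"
    unfolding norm_one_add_cis_squared r using a0 b0 q0 qq by (simp add: field_simps power2_eq_square)
  have N2: "cmod (1 - complex_of_real r * cis \<phi>) ^ 2 = (real a + real b - 2 * q * cos \<phi>) / real b"
  proof -
    have "cmod (1 - complex_of_real r * cis \<phi>) ^ 2 = 1 + r^2 - 2 * r * cos \<phi>"
      using norm_one_add_cis_squared[of "- r" \<phi>] by simp
    also have "\<dots> = (real a + real b - 2 * q * cos \<phi>) / real b"
      unfolding r using b0 q0 qq by (simp add: field_simps power2_eq_square)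
    finally show ?thesis .
  qed
  have P: "(2 powr (-((real a + real b) / 2)))^2 = (1/2)^a * (1/2)^b"
    using two_powr_neg_half_squared[of "a + b"] by (simp add: power_add power_one_over)
  have "(2 powr (-((real a + real b) / 2)) * cmod (c_integrand r a b \<phi>))^2 =
      (2 powr (-((real a + real b) / 2)))^2 *
      (cmod (1 + complex_of_real (inverse r) * cis (- \<phi>)) ^ 2) ^ a *
      (cmod (1 - complex_of_real r * cis \<phi>) ^ 2) ^ b"
    unfolding c_integrand_def
    by (simp add: norm_mult norm_power power_mult_distrib mult.commute flip: power_mult)
  also have "\<dots> = ((1/2) * ((real a + real b + 2 * q * cos \<phi>) / real a)) ^ a *
      ((1/2) * ((real a + real b - 2 * q * cos \<phi>) / real b)) ^ b"
    unfolding P N1 N2 by (simp only: power_mult_distrib ac_simps)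
  finally show ?thesis unfolding r_def by simp
qed

lemma binomial_product_le_gaussian:
  fixes a b :: nat and u :: real
  assumes "a \<ge> 1" "b \<ge> 1" "\<bar>u\<bar> \<le> 1"
  defines "n \<equiv> real a + real b" and "q \<equiv> sqrt (real a * real b)"
  shows "((n + 2 * q * u) / (2 * real a)) ^ a * ((n - 2 * q * u) / (2 * real b)) ^ b
    \<le> exp (- (real a * real b / n) * (u - (real a - real b) / (2 * q))^2)"
proof -
  define w where "w = u - (real a - real b) / (2 * q)"
  have a0: "real a > 0" and b0: "real b > 0" using assms by auto
  have n0: "n > 0" unfolding n_def using a0 b0 by simp
  have q0: "q > 0" and qq: "q^2 = real a * real b" unfolding q_def using a0 b0 by simp_all
  have qn: "2 * q \<le> n"
  proof -
    have "0 \<le> (sqrt (real a) - sqrt (real b))^2" by simp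
    then show ?thesis unfolding n_def q_def using a0 b0 by (simp add: power2_diff real_sqrt_mult)
  qed
  have "\<bar>2 * q * u\<bar> \<le> 2 * q" using assms(3) q0 by (simp add: abs_mult mult_left_le)
  then have qu: "- n \<le> 2 * q * u" "2 * q * u \<le> n" using qn unfolding abs_le_iff by linarith+
  have X1: "(n + 2 * q * u) / (2 * real a) = 1 + q * w / real a"
    unfolding w_def n_def using a0 q0 by (simp add: field_simps)
  have X2: "(n - 2 * q * u) / (2 * real b) = 1 + - q * w / real b"
    unfolding w_def n_def using b0 q0 by (simp add: field_simps)
  have "((n + 2 * q * u) / (2 * real a)) ^ a * ((n - 2 * q * u) / (2 * real b)) ^ b \<le>
      exp (real a * (q * w / real a - (q * w / real a)^2 / (2 * (n / real a)))) *
      exp (real b * (- q * w / real b - (- q * w / real b)^2 / (2 * (n / real b))))"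
  proof -
    have "0 \<le> (n + 2 * q * u) / (2 * real a)" "(n + 2 * q * u) / (2 * real a) \<le> n / real a"
      "0 \<le> (n - 2 * q * u) / (2 * real b)" "(n - 2 * q * u) / (2 * real b) \<le> n / real b"
      using qu a0 b0 divide_right_mono[of "n + 2 * q * u" "2 * n" "2 * real a"]
        divide_right_mono[of "n - 2 * q * u" "2 * n" "2 * real b"] by auto
    moreover have "1 \<le> n / real a" "1 \<le> n / real b" using a0 b0 by (simp_all add: n_def)
    ultimately show ?thesis
      unfolding X1 X2 by (intro mult_mono power_le_exp_sub_square) auto
  qed
  also have "\<dots> = exp (- (real a * real b / n) * w^2)"
  proof -
    have "real a * (q * w / real a - (q * w / real a)^2 / (2 * (n / real a))) = q * w - q^2 * w^2 / (2 * n)"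
      using a0 n0 by (simp add: field_simps power2_eq_square)
    moreover have "real b * (- q * w / real b - (- q * w / real b)^2 / (2 * (n / real b))) =
        - q * w - q^2 * w^2 / (2 * n)"
      using b0 n0 by (simp add: field_simps power2_eq_square)
    moreover have "q * w - q^2 * w^2 / (2 * n) + (- q * w - q^2 * w^2 / (2 * n)) =
        - (real a * real b / n) * w^2"
      unfolding qq by (simp add: field_simps)
    ultimately show ?thesis by (simp flip: exp_add)
  qed
  finally show ?thesis unfolding w_def .
qed

lemma c_integrand_le_gaussian:
  fixes a b :: nat
  assumes "a \<ge> 1" "b \<ge> 1"
  shows "2 powr (-((real a + real b) / 2)) * cmod (c_integrand (sqrt (real a / real b)) a b \<phi>)
    \<le> exp (- (real a * real b / (2 * (real a + real b))) *
            (cos \<phi> - (real a - real b) / (2 * sqrt (real a * real b)))^2)"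
    (is "?S \<le> exp (- ?K * ?w^2)")
proof -
  have "?S^2 \<le> exp (- (real a * real b / (real a + real b)) * ?w^2)"
    unfolding c_integrand_norm_squared[OF assms]
    by (rule binomial_product_le_gaussian[OF assms]) simp
  also have "\<dots> = exp (2 * (- ?K * ?w^2))"
    by (simp del: distrib_left_numeral)
  also have "\<dots> = (exp (- ?K * ?w^2))^2"
    by (rule exp_double)
  finally show ?thesis by (rule power2_le_imp_le) simp
qed

section \<open>Integrals of Gaussians in \<open>cos \<phi>\<close>\<close>

lemma half_le_sin: fixes t :: real assumes "0 \<le> t" "t \<le> pi/2" shows "t/2 \<le> sin t"
proof -
  define h where "h x = sin x - x/2" for x :: real
  have D: "DERIV h x :> cos x - 1/2" for x unfolding h_def by (auto intro!: derivative_eq_intros)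
  show ?thesis
  proof (cases "t \<le> pi/3")
    case True
    have "h 0 \<le> h t"
    proof (rule DERIV_nonneg_imp_nondecreasing[OF assms(1)])
      fix x assume x: "0 \<le> x" "x \<le> t"
      have "cos (pi/3) \<le> cos x" using x True by (intro cos_monotone_0_pi_le) auto
      then show "\<exists>y. DERIV h x :> y \<and> 0 \<le> y"
        using D by (intro exI[of _ "cos x - 1/2"]) (auto simp: cos_60)
    qed
    then show ?thesis by (simp add: h_def)
  next
    case False
    have "h (pi/2) \<le> h t"
    proof (rule DERIV_nonpos_imp_nonincreasing[OF assms(2)])
      fix x assume x: "t \<le> x" "x \<le> pi/2"
      have "cos x \<le> cos (pi/3)" using x False by (intro cos_monotone_0_pi_le) auto
      then show "\<exists>y. DERIV h x :> y \<and> y \<le> 0"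
        using D by (intro exI[of _ "cos x - 1/2"]) (auto simp: cos_60)
    qed
    moreover have "h (pi/2) \<ge> 0" unfolding h_def using pi_less_4 by simp
    ultimately show ?thesis by (simp add: h_def)
  qed
qed

lemma sin_squared_ge: fixes t :: real assumes "\<bar>t\<bar> \<le> pi/2" shows "t^2/4 \<le> sin t ^ 2"
proof -
  have "\<bar>t\<bar>/2 \<le> sin \<bar>t\<bar>" using assms by (intro half_le_sin) auto
  then have "(\<bar>t\<bar>/2)^2 \<le> sin \<bar>t\<bar> ^ 2" by (intro power_mono) auto
  moreover have "sin \<bar>t\<bar> ^ 2 = sin t ^ 2" by (cases "t \<ge> 0") auto
  ultimately show ?thesis by (simp add: power_divide)
qed

lemma lorentzian_integral:
  fixes M e :: real assumes M: "M > 0"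
  shows "(\<lambda>x. 1 / (1 + M * (x - e)^2)) integrable_on {0..2*pi}"
    and "integral {0..2*pi} (\<lambda>x. 1 / (1 + M * (x - e)^2)) \<le> pi / sqrt M"
proof -
  have "((\<lambda>x. arctan (sqrt M * (x - e)) / sqrt M) has_real_derivative 1 / (1 + M * (x - e)^2))
      (at x within {0..2*pi})" for x
    using M by (auto intro!: derivative_eq_intros simp: power_mult_distrib divide_simps)
  then have int: "((\<lambda>x. 1 / (1 + M * (x - e)^2)) has_integral
      (arctan (sqrt M * (2*pi - e)) - arctan (sqrt M * (0 - e))) / sqrt M) {0..2*pi}"
    by (subst diff_divide_distrib, intro fundamental_theorem_of_calculus)
       (auto simp flip: has_real_derivative_iff_has_vector_derivative)
  then show "(\<lambda>x. 1 / (1 + M * (x - e)^2)) integrable_on {0..2*pi}" by blast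
  have "arctan (sqrt M * (2*pi - e)) - arctan (sqrt M * (0 - e)) \<le> pi"
    using arctan_ubound[of "sqrt M * (2*pi - e)"] arctan_lbound[of "sqrt M * (0 - e)"] by linarith
  then show "integral {0..2*pi} (\<lambda>x. 1 / (1 + M * (x - e)^2)) \<le> pi / sqrt M"
    unfolding integral_unique[OF int] using M by (intro divide_right_mono) auto
qed

definition bump :: "real \<Rightarrow> real \<Rightarrow> real \<Rightarrow> real" where
  "bump N c \<phi> = 1 / (1 + N * sin ((\<phi> - c) / 2)^2)"

lemma bump_le_lorentzians:
  fixes N c \<phi> :: real
  assumes N: "N > 0" and c: "-pi \<le> c" "c \<le> pi" and \<phi>: "\<phi> \<in> {0..2*pi}"
  shows "bump N c \<phi> \<le> 1 / (1 + N/16 * (\<phi> - c)^2) + 1 / (1 + N/16 * (\<phi> - (c + 2*pi))^2)"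
proof -
  \<comment> \<open>\<open>sin\<^sup>2\<close> has period \<open>pi\<close>, so on \<open>[0, 2*pi]\<close> the bump may also peak at \<open>\<phi> = c + 2*pi\<close>\<close>
  define y where "y = (\<phi> - c) / 2"
  have y: "-pi/2 \<le> y" "y \<le> 3*pi/2" using \<phi> c unfolding y_def by auto
  have pos: "0 < 1 + N/16 * (\<phi> - c)^2" "0 < 1 + N/16 * (\<phi> - (c + 2*pi))^2"
    using N by (auto intro: add_pos_nonneg)
  have le: "bump N c \<phi> \<le> 1 / (1 + N/16 * (2 * x)^2)" if "\<bar>x\<bar> \<le> pi/2" "sin x ^ 2 = sin y ^ 2" for x
  proof -
    have "N/16 * (2 * x)^2 \<le> N * sin y ^ 2"
      using sin_squared_ge[OF that(1)] N that(2) by (simp add: power_mult_distrib)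
    then show ?thesis unfolding bump_def y_def[symmetric] using N
      by (intro divide_left_mono) (auto intro!: mult_pos_pos add_pos_nonneg)
  qed
  show ?thesis
  proof (cases "y \<le> pi/2")
    case True
    have "\<bar>y\<bar> \<le> pi/2" using True y by auto
    from le[OF this refl] have "bump N c \<phi> \<le> 1 / (1 + N/16 * (\<phi> - c)^2)"
      by (simp only: y_def times_divide_eq_right nonzero_mult_div_cancel_left zero_neq_numeral)
    then show ?thesis using pos by (intro add_increasing2) simp_all
  next
    case False
    have "\<bar>y - pi\<bar> \<le> pi/2" using False y unfolding abs_le_iff by linarith
    moreover have "sin (y - pi) ^ 2 = sin y ^ 2" by (simp add: sin_diff)
    moreover have "2 * (y - pi) = \<phi> - (c + 2*pi)" by (simp add: y_def field_simps)
    ultimately have "bump N c \<phi> \<le> 1 / (1 + N/16 * (\<phi> - (c + 2*pi))^2)"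
      using le[of "y - pi"] by (simp only:)
    then show ?thesis using pos by (intro add_increasing) simp_all
  qed
qed

lemma bump_integral:
  fixes N c :: real assumes N: "N > 0" and c: "-pi \<le> c" "c \<le> pi"
  shows "bump N c integrable_on {0..2*pi}" and "integral {0..2*pi} (bump N c) \<le> 8*pi / sqrt N"
proof -
  have "1 + N * s^2 \<noteq> 0" for s using N add_pos_nonneg[of 1 "N * s^2"] by auto
  then show int: "bump N c integrable_on {0..2*pi}"
    unfolding bump_def[abs_def] by (intro integrable_continuous_interval continuous_intros) auto
  have M: "N/16 > 0" using N by simp
  note L1 = lorentzian_integral[OF M, of c] and L2 = lorentzian_integral[OF M, of "c + 2*pi"]
  have "integral {0..2*pi} (bump N c) \<le>
      integral {0..2*pi} (\<lambda>\<phi>. 1 / (1 + N/16 * (\<phi> - c)^2) + 1 / (1 + N/16 * (\<phi> - (c + 2*pi))^2))"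
    using L1(1) L2(1) by (intro integral_le int integrable_add bump_le_lorentzians N c)
  also have "\<dots> \<le> pi / sqrt (N/16) + pi / sqrt (N/16)"
    using L1 L2 by (simp add: integral_add)
  also have "\<dots> = 8*pi / sqrt N" by (simp add: real_sqrt_divide)
  finally show "integral {0..2*pi} (bump N c) \<le> 8*pi / sqrt N" .
qed

definition cos_root :: "real \<Rightarrow> real" where
  "cos_root v = arccos (max (-1) (min 1 v))"

lemma cos_root_bounds: "0 \<le> cos_root v" "cos_root v \<le> pi"
  unfolding cos_root_def by (simp_all add: arccos_lbound arccos_ubound)

lemma cos_sub_squared_inside:
  fixes v \<phi> :: real
  assumes v: "\<bar>v\<bar> \<le> 1"
  defines "sA \<equiv> sin ((\<phi> - cos_root v) / 2)^2" and "sB \<equiv> sin ((\<phi> + cos_root v) / 2)^2"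
  shows "(cos \<phi> - v)^2 = 4 * sA * sB" and "1 - v^2 \<le> 4 * max sA sB"
proof -
  define \<psi> where "\<psi> = cos_root v"
  define A where "A = (\<phi> + \<psi>) / 2"
  define B where "B = (\<phi> - \<psi>) / 2"
  have \<psi>: "cos \<psi> = v" "sin \<psi> ^ 2 = 1 - v^2"
    unfolding \<psi>_def cos_root_def using v sin_squared_eq[of "arccos v"] by (simp_all add: abs_le_iff)
  have "cos \<phi> - v = - 2 * sin A * sin B"
    using cos_diff_cos[of \<phi> \<psi>] sin_minus[of "(\<phi> - \<psi>) / 2"] unfolding A_def B_def \<psi>(1)
    by (simp add: minus_divide_left)
  then show "(cos \<phi> - v)^2 = 4 * sA * sB"
    unfolding sA_def sB_def \<psi>_def[symmetric] A_def B_def by (simp add: power_mult_distrib)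
  have "A - B = \<psi>" by (simp add: A_def B_def field_simps)
  then have "\<bar>sin \<psi>\<bar> = \<bar>sin A * cos B - cos A * sin B\<bar>" by (simp flip: sin_diff)
  also have "\<dots> \<le> \<bar>sin A\<bar> + \<bar>sin B\<bar>"
    using abs_triangle_ineq4[of "sin A * cos B" "cos A * sin B"]
      mult_right_le_one_le[of "\<bar>sin A\<bar>" "\<bar>cos B\<bar>"] mult_left_le_one_le[of "\<bar>sin B\<bar>" "\<bar>cos A\<bar>"]
    by (simp add: abs_mult mult.commute)
  finally have "\<bar>sin \<psi>\<bar>^2 \<le> (\<bar>sin A\<bar> + \<bar>sin B\<bar>)^2" by (intro power_mono) auto
  then have "1 - v^2 \<le> (\<bar>sin A\<bar> + \<bar>sin B\<bar>)^2" using \<psi>(2) by simp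
  also have "\<dots> \<le> 2 * (sin A ^ 2 + sin B ^ 2)"
    using sum_squares_ge_zero[of "\<bar>sin A\<bar> - \<bar>sin B\<bar>" 0] by (simp add: power2_eq_square algebra_simps)
  also have "\<dots> \<le> 4 * max sA sB"
    unfolding sA_def sB_def \<psi>_def[symmetric] A_def B_def by (simp add: max_def)
  finally show "1 - v^2 \<le> 4 * max sA sB" .
qed

lemma cos_sub_squared_outside:
  fixes v \<phi> :: real
  assumes v: "\<bar>v\<bar> > 1"
  shows "sin ((\<phi> + cos_root v) / 2)^2 = sin ((\<phi> - cos_root v) / 2)^2"
    and "(cos \<phi> - v)^2 = (\<bar>v\<bar> - 1 + 2 * sin ((\<phi> - cos_root v) / 2)^2)^2"
proof -
  have "2 * (\<phi> / 2) = \<phi>" "2 * ((\<phi> - pi) / 2) = \<phi> - pi" by simp_all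
  then have "cos \<phi> = 1 - 2 * sin (\<phi> / 2)^2" "cos (\<phi> - pi) = 1 - 2 * sin ((\<phi> - pi) / 2)^2"
    using cos_double_sin[of "\<phi> / 2"] cos_double_sin[of "(\<phi> - pi) / 2"] by (simp_all only:)
  then have cos_half: "cos \<phi> = 1 - 2 * sin (\<phi> / 2)^2" "- cos \<phi> = 1 - 2 * sin ((\<phi> - pi) / 2)^2"
    by (simp_all add: cos_diff)
  consider "v > 1" "cos_root v = 0" | "v < -1" "cos_root v = pi"
    using v by (cases "v > 1") (auto simp: cos_root_def)
  then have "sin ((\<phi> + cos_root v) / 2)^2 = sin ((\<phi> - cos_root v) / 2)^2 \<and>
      \<bar>cos \<phi> - v\<bar> = \<bar>v\<bar> - 1 + 2 * sin ((\<phi> - cos_root v) / 2)^2"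
  proof cases
    case 1
    then have "v - cos \<phi> = \<bar>v\<bar> - 1 + 2 * sin ((\<phi> - cos_root v) / 2)^2" using cos_half(1) by simp
    moreover have "\<bar>cos \<phi> - v\<bar> = v - cos \<phi>" using 1 cos_le_one[of \<phi>] by linarith
    ultimately show ?thesis using 1 by simp
  next
    case 2
    then have "cos \<phi> - v = \<bar>v\<bar> - 1 + 2 * sin ((\<phi> - cos_root v) / 2)^2" using cos_half(2) by simp
    moreover have "\<bar>cos \<phi> - v\<bar> = cos \<phi> - v" using 2 cos_ge_minus_one[of \<phi>] by linarith
    ultimately show ?thesis using 2 by (simp add: add_divide_distrib diff_divide_distrib sin_add sin_diff)
  qed
  then show "sin ((\<phi> + cos_root v) / 2)^2 = sin ((\<phi> - cos_root v) / 2)^2"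
    and "(cos \<phi> - v)^2 = (\<bar>v\<bar> - 1 + 2 * sin ((\<phi> - cos_root v) / 2)^2)^2"
    by (metis power2_abs)+
qed

lemma cos_sub_squared_ge:
  fixes v \<phi> :: real
  defines "sA \<equiv> sin ((\<phi> - cos_root v) / 2)^2" and "sB \<equiv> sin ((\<phi> + cos_root v) / 2)^2"
  shows "4 * (min sA sB)^2 \<le> (cos \<phi> - v)^2"
    and "\<bar>v\<bar> \<le> 3 \<Longrightarrow> \<bar>1 - v^2\<bar> * min sA sB \<le> (cos \<phi> - v)^2"
proof -
  have nonneg: "0 \<le> sA" "0 \<le> sB" unfolding sA_def sB_def by simp_all
  have "4 * (min sA sB)^2 \<le> (cos \<phi> - v)^2 \<and>
      (\<bar>v\<bar> \<le> 3 \<longrightarrow> \<bar>1 - v^2\<bar> * min sA sB \<le> (cos \<phi> - v)^2)"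
  proof (cases "\<bar>v\<bar> \<le> 1")
    case True
    note inside = cos_sub_squared_inside[OF True, of \<phi>, folded sA_def sB_def]
    have "(cos \<phi> - v)^2 = 4 * max sA sB * min sA sB"
      unfolding inside(1) by (simp add: min_def max_def)
    moreover have "\<bar>1 - v^2\<bar> = 1 - v^2"
      using True abs_square_le_1[of v] by simp
    ultimately show ?thesis
      using inside(2) nonneg by (auto simp: power2_eq_square intro!: mult_right_mono)
  next
    case False
    then have v: "\<bar>v\<bar> > 1" by simp
    note outside = cos_sub_squared_outside[OF v, of \<phi>, folded sA_def sB_def]
    define d where "d = \<bar>v\<bar> - 1"
    have d: "d > 0" using v by (simp add: d_def)
    have sq: "(cos \<phi> - v)^2 = (d + 2 * sA)^2" and min: "min sA sB = sA"
      using outside by (simp_all add: d_def)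
    have "4 * sA^2 \<le> (d + 2 * sA)^2"
      using d nonneg by (simp add: power2_eq_square algebra_simps)
    moreover have "\<bar>1 - v^2\<bar> * sA \<le> (d + 2 * sA)^2" if "\<bar>v\<bar> \<le> 3"
    proof -
      have "1 < \<bar>v\<bar>^2" using one_less_power[OF v, of 2] by simp
      then have "\<bar>1 - v^2\<bar> = \<bar>v\<bar>^2 - 1" by simp
      also have "\<dots> = d * (\<bar>v\<bar> + 1)" by (simp add: d_def power2_eq_square algebra_simps)
      also have "\<dots> \<le> 4 * d" using that d by simp
      finally have "\<bar>1 - v^2\<bar> * sA \<le> 4 * d * sA" using nonneg by (intro mult_right_mono)
      also have "\<dots> \<le> (d + 2 * sA)^2" using d nonneg by (simp add: power2_eq_square algebra_simps)
      finally show ?thesis .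
    qed
    ultimately show ?thesis unfolding sq min by simp
  qed
  then show "4 * (min sA sB)^2 \<le> (cos \<phi> - v)^2"
    and "\<bar>v\<bar> \<le> 3 \<Longrightarrow> \<bar>1 - v^2\<bar> * min sA sB \<le> (cos \<phi> - v)^2" by simp_all
qed

lemma exp_neg_le_inverse: fixes z :: real assumes "0 \<le> z" shows "exp (- z) \<le> 1 / (1 + z)"
  using exp_ge_add_one_self[of z] assms by (simp add: exp_minus divide_left_mono inverse_eq_divide)

lemma inverse_one_add_square_le: fixes x :: real assumes "0 \<le> x" shows "1 / (1 + x^2) \<le> 2 / (1 + x)"
proof -
  have "0 \<le> 2 * (x - 1/4)^2" by simp
  then have "1 + x \<le> 2 * (1 + x^2)" by (simp add: power2_eq_square algebra_simps)
  then show ?thesis using assms by (simp add: field_simps add_pos_nonneg)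
qed

lemma inverse_one_add_min_le:
  fixes \<alpha> x y :: real assumes "0 \<le> \<alpha>" "0 \<le> x" "0 \<le> y"
  shows "1 / (1 + \<alpha> * min x y) \<le> 1 / (1 + \<alpha> * x) + 1 / (1 + \<alpha> * y)"
  using assms by (cases "x \<le> y") (auto simp: min_def intro!: add_nonneg_nonneg)

lemma gaussian_le_bumps_sqrt:
  fixes K v \<phi> :: real
  assumes K: "K > 0"
  shows "exp (- K * (cos \<phi> - v)^2) \<le>
    2 * (bump (2 * sqrt K) (cos_root v) \<phi> + bump (2 * sqrt K) (- cos_root v) \<phi>)"
proof -
  define sA where "sA = sin ((\<phi> - cos_root v) / 2)^2"
  define sB where "sB = sin ((\<phi> + cos_root v) / 2)^2"
  define m where "m = min sA sB"
  have m: "0 \<le> m" unfolding m_def sA_def sB_def by simp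
  have "(2 * sqrt K * m)^2 \<le> K * (cos \<phi> - v)^2"
    using cos_sub_squared_ge(1)[of \<phi> v] K unfolding m_def sA_def sB_def
    by (simp add: power_mult_distrib)
  then have "exp (- K * (cos \<phi> - v)^2) \<le> exp (- ((2 * sqrt K * m)^2))" by simp
  also have "\<dots> \<le> 1 / (1 + (2 * sqrt K * m)^2)" by (intro exp_neg_le_inverse) simp
  also have "\<dots> \<le> 2 / (1 + 2 * sqrt K * m)" using K m by (intro inverse_one_add_square_le) simp
  also have "\<dots> \<le> 2 * (1 / (1 + 2 * sqrt K * sA) + 1 / (1 + 2 * sqrt K * sB))"
    using inverse_one_add_min_le[of "2 * sqrt K" sA sB] K unfolding m_def sA_def sB_def by simp
  finally show ?thesis unfolding bump_def sA_def sB_def by simp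
qed

lemma gaussian_le_bumps:
  fixes K v \<phi> :: real
  assumes K: "K > 0" and v: "\<bar>v\<bar> \<le> 3"
  shows "exp (- K * (cos \<phi> - v)^2) \<le>
    bump (K * \<bar>1 - v^2\<bar>) (cos_root v) \<phi> + bump (K * \<bar>1 - v^2\<bar>) (- cos_root v) \<phi>"
proof -
  define N where "N = K * \<bar>1 - v^2\<bar>"
  define sA where "sA = sin ((\<phi> - cos_root v) / 2)^2"
  define sB where "sB = sin ((\<phi> + cos_root v) / 2)^2"
  have N: "0 \<le> N" and m: "0 \<le> min sA sB" unfolding N_def sA_def sB_def using K by simp_all
  have "N * min sA sB \<le> K * (cos \<phi> - v)^2"
    using cos_sub_squared_ge(2)[OF v, of \<phi>] K unfolding N_def sA_def sB_def by simp
  then have "exp (- K * (cos \<phi> - v)^2) \<le> exp (- (N * min sA sB))" by simp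
  also have "\<dots> \<le> 1 / (1 + N * min sA sB)" using N m by (intro exp_neg_le_inverse) simp
  also have "\<dots> \<le> 1 / (1 + N * sA) + 1 / (1 + N * sB)"
    using N by (intro inverse_one_add_min_le) (simp_all add: sA_def sB_def)
  finally show ?thesis unfolding bump_def sA_def sB_def N_def by simp
qed

lemma integral_le_bump_pair:
  fixes f :: "real \<Rightarrow> real" and C N c :: real
  assumes f: "continuous_on {0..2*pi} f" and C: "0 \<le> C" and N: "N > 0" and c: "0 \<le> c" "c \<le> pi"
    and le: "\<And>\<phi>. \<phi> \<in> {0..2*pi} \<Longrightarrow> f \<phi> \<le> C * (bump N c \<phi> + bump N (- c) \<phi>)"
  shows "integral {0..2*pi} f \<le> 16 * C * pi / sqrt N"
proof -
  note B1 = bump_integral[OF N, of c] and B2 = bump_integral[OF N, of "- c"]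
  have "integral {0..2*pi} f \<le> integral {0..2*pi} (\<lambda>\<phi>. C * (bump N c \<phi> + bump N (- c) \<phi>))"
    using B1 B2 c by (intro integral_le integrable_continuous_interval[OF f] integrable_on_mult_right
      integrable_add le) auto
  also have "\<dots> = C * (integral {0..2*pi} (bump N c) + integral {0..2*pi} (bump N (- c)))"
    using B1 B2 c by (simp add: integral_add)
  also have "\<dots> \<le> C * (8*pi / sqrt N + 8*pi / sqrt N)"
    using B1 B2 c C by (intro mult_left_mono add_mono) auto
  finally show ?thesis by (simp add: ac_simps)
qed

lemma gaussian_integral_le_quarter:
  fixes K v :: real assumes "K > 0"
  shows "integral {0..2*pi} (\<lambda>\<phi>. exp (- K * (cos \<phi> - v)^2)) \<le> 32 * pi / sqrt (2 * sqrt K)"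
proof -
  have "continuous_on {0..2*pi} (\<lambda>\<phi>. exp (- K * (cos \<phi> - v)^2))" by (intro continuous_intros)
  from integral_le_bump_pair[OF this, of 2 "2 * sqrt K" "cos_root v"] show ?thesis
    using gaussian_le_bumps_sqrt[OF assms] cos_root_bounds[of v] assms by simp
qed

lemma gaussian_integral_le_half:
  fixes K v :: real assumes "K > 0" "\<bar>v\<bar> \<le> 3" "v^2 \<noteq> 1"
  shows "integral {0..2*pi} (\<lambda>\<phi>. exp (- K * (cos \<phi> - v)^2)) \<le> 16 * pi / sqrt (K * \<bar>1 - v^2\<bar>)"
proof -
  have "continuous_on {0..2*pi} (\<lambda>\<phi>. exp (- K * (cos \<phi> - v)^2))" by (intro continuous_intros)
  from integral_le_bump_pair[OF this, of 1 "K * \<bar>1 - v^2\<bar>" "cos_root v"] show ?thesis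
    using gaussian_le_bumps[OF assms(1,2)] cos_root_bounds[of v] assms by simp
qed

section \<open>Unbalanced indices\<close>

lemma abs_alt_binomial_sum_le: "\<bar>alt_binomial_sum a b\<bar> \<le> real ((a + b) choose a)"
proof -
  have "\<bar>alt_binomial_sum a b\<bar> \<le> (\<Sum>j\<le>a. real (a choose j) * real (b choose j))"
    unfolding alt_binomial_sum_def by (rule order_trans[OF sum_abs]) (simp add: abs_mult)
  also have "\<dots> = real (\<Sum>j\<le>a. (b choose j) * (a choose (a - j)))"
    by (auto simp: mult.commute binomial_symmetric[symmetric] intro!: sum.cong)
  also have "\<dots> = real ((a + b) choose a)"
    by (simp add: vandermonde add.commute)
  finally show ?thesis .
qed

lemma binomial_le_geometric: "real (n choose k) \<le> 10^k * (10/9)^(n - k)"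
proof (cases "k \<le> n")
  case True
  have "real (n choose k) * (1/10)^k * (9/10)^(n - k) \<le> (\<Sum>j\<le>n. real (n choose j) * (1/10)^j * (9/10)^(n - j))"
    using True by (intro member_le_sum) auto
  also have "\<dots> = 1" by (simp flip: binomial_ring)
  finally show ?thesis by (simp add: field_simps power_divide)
qed (simp add: binomial_eq_0)

text \<open>Twentieth powers keep the exponent \<open>k \<le> n/10\<close> integral.\<close>

lemma binomial_small_index_le:
  fixes n k :: nat assumes "10 * k \<le> n"
  shows "real (n choose k) ^ 20 \<le> 900^n"
proof -
  have "real (n choose k) ^ 20 \<le> ((10::real)^k * (10/9)^(n - k))^20"
    by (intro power_mono binomial_le_geometric) simp
  also have "\<dots> = (10^20)^k * ((10/9)^20)^(n - k)"
    by (simp only: power_mult_distrib mult.commute flip: power_mult)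
  also have "\<dots> \<le> 100^n * 9^n"
  proof (rule mult_mono)
    have "((10::real)^20)^k = 100^(10 * k)" by (simp add: power_mult)
    also have "\<dots> \<le> 100^n" using assms by (intro power_increasing) auto
    finally show "((10::real)^20)^k \<le> 100^n" .
    have "((10/9::real)^20)^(n - k) \<le> 9^(n - k)" by (intro power_mono) (simp_all add: power_divide)
    also have "\<dots> \<le> 9^n" by (intro power_increasing) auto
    finally show "((10/9::real)^20)^(n - k) \<le> 9^n" .
  qed auto
  also have "\<dots> = 900^n" by (simp flip: power_mult_distrib)
  finally show ?thesis .
qed

lemma binomial_small_index_scaled_le:
  fixes n k :: nat assumes "10 * k \<le> n"
  shows "((2 powr (- (real n / 2)) * real (n choose k))^2)^10 \<le> (9/10)^n"
proof -
  have "((2::real)^n)^10 = (2^10)^n" by (simp only: mult.commute flip: power_mult)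
  then have "((2 powr (- (real n / 2)) * real (n choose k))^2)^10 = real (n choose k) ^ 20 / 1024^n"
    by (simp add: power_mult_distrib two_powr_neg_half_squared power_divide flip: power_mult)
  also have "\<dots> \<le> 900^n / 1024^n"
    using binomial_small_index_le[OF assms] by (intro divide_right_mono) auto
  also have "\<dots> \<le> (9/10)^n" by (simp add: power_mono flip: power_divide)
  finally show ?thesis .
qed

lemma binomial_small_index_decay:
  "\<exists>E>0. \<forall>n k. 10 * k \<le> n \<longrightarrow> 2 powr (- (real n / 2)) * real (n choose k) \<le> E / sqrt (1 + real n / 2)"
proof -
  have "(\<lambda>n. (1 + real n)^10 * (9/10::real)^n) \<longlonglongrightarrow> 0" by real_asymp
  then have "Bseq (\<lambda>n. (1 + real n)^10 * (9/10::real)^n)" by (intro convergent_imp_Bseq convergentI)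
  then obtain D where D: "\<And>n. (1 + real n)^10 * (9/10::real)^n \<le> D"
    unfolding Bseq_def real_norm_def using abs_le_D1 by blast
  define E where "E = sqrt (max 1 D)"
  have "2 powr (- (real n / 2)) * real (n choose k) \<le> E / sqrt (1 + real n / 2)" if "10 * k \<le> n" for n k
  proof -
    define y where "y = 2 powr (- (real n / 2)) * real (n choose k)"
    define t where "t = y^2 * (1 + real n / 2)"
    have "t^10 = (y^2)^10 * (1 + real n / 2)^10" unfolding t_def by (simp add: power_mult_distrib)
    also have "\<dots> \<le> (9/10)^n * (1 + real n)^10"
      using binomial_small_index_scaled_le[OF that] unfolding y_def[symmetric]
      by (intro mult_mono power_mono) auto
    also have "\<dots> \<le> D" using D[of n] by (simp add: mult.commute)
    finally have "t^10 \<le> D" .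
    moreover have "t \<le> t^10" if "1 \<le> t" using that by (intro self_le_power) auto
    ultimately have "t \<le> max 1 D" by linarith
    then have "y^2 \<le> max 1 D / (1 + real n / 2)" unfolding t_def by (simp add: field_simps add_pos_nonneg)
    then have "sqrt (y^2) \<le> sqrt (max 1 D / (1 + real n / 2))" by (rule real_sqrt_le_mono)
    then show ?thesis unfolding E_def y_def by (simp add: real_sqrt_divide)
  qed
  moreover have "E > 0" unfolding E_def by simp
  ultimately show ?thesis by blast
qed

lemma unbalanced_c_coeff_bound:
  "\<exists>E>0. \<forall>a b. 10 * a \<le> a + b \<or> 10 * b \<le> a + b \<longrightarrow>
     cmod (c_coeff ((real a + real b) / 2) ((real b - real a) / 2)) \<le> E * (1 + (real a + real b) / 2) powr (-1/2)"
proof -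
  obtain E where E: "E > 0"
    and decay: "\<And>n k. 10 * k \<le> n \<Longrightarrow> 2 powr (- (real n / 2)) * real (n choose k) \<le> E / sqrt (1 + real n / 2)"
    using binomial_small_index_decay by blast
  have "cmod (c_coeff ((real a + real b) / 2) ((real b - real a) / 2)) \<le> E * (1 + (real a + real b) / 2) powr (-1/2)"
    if "10 * a \<le> a + b \<or> 10 * b \<le> a + b" for a b
  proof -
    define l where "l = (real a + real b) / 2"
    have "nat \<lfloor>l - (real b - real a) / 2\<rfloor> = a" "nat \<lfloor>l + (real b - real a) / 2\<rfloor> = b"
      by (simp_all add: l_def field_simps)
    then have "cmod (c_coeff l ((real b - real a) / 2)) = 2 powr (- (real (a + b) / 2)) * \<bar>alt_binomial_sum a b\<bar>"
      by (simp add: c_coeff_eq l_def abs_mult norm_mult)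
    also have "\<dots> \<le> 2 powr (- (real (a + b) / 2)) * real ((a + b) choose a)"
      by (intro mult_left_mono abs_alt_binomial_sum_le) simp
    also have "\<dots> \<le> E / sqrt (1 + real (a + b) / 2)"
      using that decay[of a "a + b"] decay[of b "a + b"] binomial_symmetric[of a "a + b"] by auto
    also have "\<dots> = E * (1 + l) powr (-1/2)"
      by (simp add: l_def powr_minus_divide powr_half_sqrt add_pos_nonneg)
    finally show ?thesis unfolding l_def .
  qed
  with E show ?thesis by blast
qed

section \<open>Balanced indices\<close>

lemma c_coeff_le_gaussian_integral:
  fixes a b :: nat
  assumes ab: "a \<ge> 1" "b \<ge> 1"
  defines "l \<equiv> (real a + real b) / 2" and "p \<equiv> (real b - real a) / 2"
  shows "cmod (c_coeff l p) \<le> integral {0..2*pi} (\<lambda>\<phi>. exp (- (real a * real b / (2 * (real a + real b))) *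
    (cos \<phi> - (real a - real b) / (2 * sqrt (real a * real b)))^2)) / (2*pi)"
proof (rule norm_c_coeff_le_integral)
  show "sqrt (real a / real b) > 0" using ab by simp
  show "(\<lambda>\<phi>. exp (- (real a * real b / (2 * (real a + real b))) *
      (cos \<phi> - (real a - real b) / (2 * sqrt (real a * real b)))^2)) integrable_on {0..2*pi}"
    by (intro integrable_continuous_interval continuous_intros)
  have "nat \<lfloor>l - p\<rfloor> = a" "nat \<lfloor>l + p\<rfloor> = b" by (simp_all add: l_def p_def field_simps)
  then show "2 powr (-l) * cmod (c_integrand (sqrt (real a / real b)) (nat \<lfloor>l - p\<rfloor>) (nat \<lfloor>l + p\<rfloor>) \<phi>)
      \<le> exp (- (real a * real b / (2 * (real a + real b))) *
          (cos \<phi> - (real a - real b) / (2 * sqrt (real a * real b)))^2)" for \<phi>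
    using c_integrand_le_gaussian[OF ab, of \<phi>] by (simp add: l_def)
qed

lemma balanced_gaussian_parameters:
  fixes a b :: nat
  assumes bal: "a + b < 10 * a" "a + b < 10 * b"
  defines "l \<equiv> (real a + real b) / 2" and "p \<equiv> (real b - real a) / 2"
    and "K \<equiv> real a * real b / (2 * (real a + real b))"
    and "v \<equiv> (real a - real b) / (2 * sqrt (real a * real b))"
  shows "(1 + l) / 100 \<le> K" and "\<bar>v\<bar> \<le> 3" and "\<bar>\<bar>p\<bar> - l / sqrt 2\<bar> / 4 \<le> K * \<bar>1 - v^2\<bar>"
proof -
  define n where "n = real a + real b"
  have "a \<ge> 1" "b \<ge> 1" using bal by linarith+
  then have a0: "real a > 0" and b0: "real b > 0" and n2: "n \<ge> 2" unfolding n_def by simp_all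
  have v2: "v^2 = (real a - real b)^2 / (4 * (real a * real b))"
    unfolding v_def using a0 b0 by (simp add: power_divide power_mult_distrib)
  have ab: "9 * n^2 / 100 \<le> real a * real b"
  proof -
    have "real (a + b) < real (10 * a)" "real (a + b) < real (10 * b)"
      using bal by (simp_all only: of_nat_less_iff)
    then have "0 \<le> (real a - n / 10) * (real b - n / 10)"
      unfolding n_def by (intro mult_nonneg_nonneg) simp_all
    then show ?thesis unfolding n_def by (simp add: power2_eq_square field_simps)
  qed
  show "(1 + l) / 100 \<le> K"
  proof -
    have "9 * n / 200 \<le> K" unfolding K_def n_def[symmetric] using ab n2
      by (simp add: field_simps power2_eq_square)
    moreover have "(1 + l) / 100 \<le> 9 * n / 200" unfolding l_def n_def[symmetric] using n2 by simp
    ultimately show ?thesis by linarith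
  qed
  show "\<bar>v\<bar> \<le> 3"
  proof -
    have "(real a - real b)^2 \<le> n^2"
      using mult_pos_pos[OF a0 b0] unfolding n_def by (simp add: power2_eq_square algebra_simps)
    also have "\<dots> \<le> 36 * (real a * real b)" using ab zero_le_power2[of n] by linarith
    finally have "v^2 \<le> 3^2" unfolding v2 using a0 b0 by (simp add: field_simps)
    then show ?thesis using abs_le_square_iff[of v 3] by simp
  qed
  show "\<bar>\<bar>p\<bar> - l / sqrt 2\<bar> / 4 \<le> K * \<bar>1 - v^2\<bar>"
  proof -
    define x where "x = \<bar>p\<bar> - l / sqrt 2"
    have l0: "l > 0" unfolding l_def using a0 b0 by simp
    define D where "D = (real a - real b)^2"
    have "K * (1 - v^2) = (4 * (real a * real b) - D) / (8 * n)"
      unfolding K_def v2 D_def[symmetric] n_def[symmetric] using a0 b0 n2 by (simp add: field_simps)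
    also have "4 * (real a * real b) - D = 4 * l^2 - 8 * p^2"
      unfolding D_def l_def p_def by (simp add: power2_eq_square field_simps)
    also have "n = 2 * l" unfolding n_def l_def by simp
    finally have eq: "K * (1 - v^2) = (l^2 - 2 * p^2) / (4 * l)" using l0 by (simp add: field_simps)
    have "K > 0" unfolding K_def using a0 b0 by simp
    then have "K * \<bar>1 - v^2\<bar> = \<bar>K * (1 - v^2)\<bar>" by (simp add: abs_mult)
    also have "\<dots> = \<bar>l^2 - 2 * p^2\<bar> / (4 * l)" unfolding eq using l0 by (simp add: abs_divide)
    finally have K: "K * \<bar>1 - v^2\<bar> = \<bar>l^2 - 2 * p^2\<bar> / (4 * l)" .
    have "l * \<bar>x\<bar> \<le> \<bar>l^2 - 2 * p^2\<bar>"
    proof -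
      have "l^2 - 2 * p^2 = - sqrt 2 * x * (l + sqrt 2 * \<bar>p\<bar>)"
        unfolding x_def by (simp add: field_simps power2_eq_square)
      then have "\<bar>l^2 - 2 * p^2\<bar> = sqrt 2 * \<bar>x\<bar> * (l + sqrt 2 * \<bar>p\<bar>)"
        using l0 by (simp add: abs_mult)
      also have "\<dots> \<ge> 1 * \<bar>x\<bar> * l" using l0 by (intro mult_mono) auto
      finally show ?thesis by (simp add: mult.commute)
    qed
    then have "l * \<bar>x\<bar> / (4 * l) \<le> K * \<bar>1 - v^2\<bar>" unfolding K using l0 by (intro divide_right_mono) auto
    then show ?thesis unfolding x_def[symmetric] using l0 by simp
  qed
qed

lemma balanced_c_coeff_le_quarter:
  fixes a b :: nat
  assumes bal: "a + b < 10 * a" "a + b < 10 * b"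
  defines "l \<equiv> (real a + real b) / 2" and "p \<equiv> (real b - real a) / 2"
  shows "cmod (c_coeff l p) \<le> 36 * (1 + l) powr (-1/4)"
proof -
  define K where "K = real a * real b / (2 * (real a + real b))"
  define v where "v = (real a - real b) / (2 * sqrt (real a * real b))"
  have ab: "a \<ge> 1" "b \<ge> 1" using bal by linarith+
  have l0: "1 + l > 0" unfolding l_def by (simp add: add_pos_nonneg)
  have K: "(1 + l) / 100 \<le> K"
    using balanced_gaussian_parameters(1)[OF bal] unfolding K_def l_def .
  moreover have "0 < (1 + l) / 100" using l0 by simp
  ultimately have K0: "K > 0" by linarith
  have "cmod (c_coeff l p) \<le> integral {0..2*pi} (\<lambda>\<phi>. exp (- K * (cos \<phi> - v)^2)) / (2*pi)"
    using c_coeff_le_gaussian_integral[OF ab] unfolding l_def p_def K_def v_def .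
  also have "\<dots> \<le> (32 * pi / sqrt (2 * sqrt K)) / (2 * pi)"
    by (intro divide_right_mono gaussian_integral_le_quarter K0) simp
  also have "\<dots> = 16 / sqrt (2 * sqrt K)" by simp
  also have "\<dots> \<le> 16 / sqrt (2 * sqrt ((1 + l) / 100))"
    using K l0 by (intro divide_left_mono real_sqrt_le_mono mult_left_mono mult_pos_pos) auto
  also have "\<dots> = 16 * sqrt 5 / sqrt (sqrt (1 + l))"
    by (simp add: real_sqrt_divide real_sqrt_mult)
  also have "\<dots> \<le> 36 / sqrt (sqrt (1 + l))"
  proof -
    have "sqrt 5 \<le> sqrt ((9/4)^2)" by (intro real_sqrt_le_mono) (simp add: power_divide)
    then show ?thesis using l0 by (intro divide_right_mono) auto
  qed
  also have "\<dots> = 36 * (1 + l) powr (-1/4)"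
    using l0 by (simp add: powr_minus_divide powr_powr flip: powr_half_sqrt)
  finally show ?thesis .
qed

lemma balanced_c_coeff_le_half:
  fixes a b :: nat
  assumes bal: "a + b < 10 * a" "a + b < 10 * b"
  defines "l \<equiv> (real a + real b) / 2" and "p \<equiv> (real b - real a) / 2"
  assumes off: "\<bar>p\<bar> \<noteq> l / sqrt 2"
  shows "cmod (c_coeff l p) \<le> 16 * \<bar>\<bar>p\<bar> - l / sqrt 2\<bar> powr (-1/2)"
proof -
  define K where "K = real a * real b / (2 * (real a + real b))"
  define v where "v = (real a - real b) / (2 * sqrt (real a * real b))"
  define x where "x = \<bar>\<bar>p\<bar> - l / sqrt 2\<bar>"
  have ab: "a \<ge> 1" "b \<ge> 1" using bal by linarith+
  have x0: "x > 0" unfolding x_def using off by simp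
  have K0: "K > 0" unfolding K_def using ab by simp
  have v3: "\<bar>v\<bar> \<le> 3" and Kv: "x / 4 \<le> K * \<bar>1 - v^2\<bar>"
    using balanced_gaussian_parameters(2,3)[OF bal] unfolding K_def v_def x_def l_def p_def by simp_all
  have v1: "v^2 \<noteq> 1" using Kv x0 by auto
  have "cmod (c_coeff l p) \<le> integral {0..2*pi} (\<lambda>\<phi>. exp (- K * (cos \<phi> - v)^2)) / (2*pi)"
    using c_coeff_le_gaussian_integral[OF ab] unfolding l_def p_def K_def v_def .
  also have "\<dots> \<le> (16 * pi / sqrt (K * \<bar>1 - v^2\<bar>)) / (2 * pi)"
    by (intro divide_right_mono gaussian_integral_le_half K0 v3 v1) simp
  also have "\<dots> = 8 / sqrt (K * \<bar>1 - v^2\<bar>)" by simp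
  also have "\<dots> \<le> 8 / sqrt (x / 4)"
    using Kv x0 by (intro divide_left_mono real_sqrt_le_mono) auto
  also have "\<dots> = 16 * x powr (-1/2)"
    using x0 by (simp add: real_sqrt_divide powr_minus_divide powr_half_sqrt)
  finally show ?thesis unfolding x_def .
qed

lemma le_bound_term:
  fixes X C l p :: real
  assumes C: "0 \<le> C" and quarter: "X \<le> C * (1 + l) powr (-1/4)"
    and half: "\<bar>p\<bar> \<noteq> l / sqrt 2 \<Longrightarrow> X \<le> C * \<bar>\<bar>p\<bar> - l / sqrt 2\<bar> powr (-1/2)"
  shows "X \<le> C * bound_term l p"
  using quarter half C by (auto simp: bound_term_def min_mult_distrib_left)

lemma powr_neg_half_le_bound_term:
  fixes l p :: real assumes "\<bar>p\<bar> \<le> l"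
  shows "(1 + l) powr (-1/2) \<le> bound_term l p"
proof -
  have l: "0 \<le> l" using assms by simp
  have "(1 + l) powr (-1/2) \<le> (1 + l) powr (-1/4)" using l by (intro powr_mono) auto
  moreover have "(1 + l) powr (-1/2) \<le> \<bar>\<bar>p\<bar> - l / sqrt 2\<bar> powr (-1/2)" if "\<bar>p\<bar> \<noteq> l / sqrt 2"
  proof (rule powr_mono2')
    have "l / sqrt 2 \<le> l" "0 \<le> l / sqrt 2" using l by (simp_all add: divide_le_eq mult_le_cancel_left1)
    then show "\<bar>\<bar>p\<bar> - l / sqrt 2\<bar> \<le> 1 + l" using assms abs_ge_zero[of p] unfolding abs_le_iff by linarith
  qed (use that in auto)
  ultimately show ?thesis
    using le_bound_term[of 1 "(1 + l) powr (-1/2)" l p] by simp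
qed

lemma balanced_c_coeff_le_bound_term:
  fixes a b :: nat
  assumes bal: "a + b < 10 * a" "a + b < 10 * b"
  defines "l \<equiv> (real a + real b) / 2" and "p \<equiv> (real b - real a) / 2"
  shows "cmod (c_coeff l p) \<le> 36 * bound_term l p"
proof (rule le_bound_term)
  show "cmod (c_coeff l p) \<le> 36 * (1 + l) powr (-1/4)"
    unfolding l_def p_def by (rule balanced_c_coeff_le_quarter[OF bal])
  assume "\<bar>p\<bar> \<noteq> l / sqrt 2"
  then have "cmod (c_coeff l p) \<le> 16 * \<bar>\<bar>p\<bar> - l / sqrt 2\<bar> powr (-1/2)"
    unfolding l_def p_def by (rule balanced_c_coeff_le_half[OF bal])
  also have "\<dots> \<le> 36 * \<bar>\<bar>p\<bar> - l / sqrt 2\<bar> powr (-1/2)" by (intro mult_right_mono) auto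
  finally show "cmod (c_coeff l p) \<le> 36 * \<bar>\<bar>p\<bar> - l / sqrt 2\<bar> powr (-1/2)" .
qed simp

lemma unbalanced_c_coeff_le_bound_term:
  "\<exists>E>0. \<forall>a b. 10 * a \<le> a + b \<or> 10 * b \<le> a + b \<longrightarrow>
     cmod (c_coeff ((real a + real b) / 2) ((real b - real a) / 2))
       \<le> E * bound_term ((real a + real b) / 2) ((real b - real a) / 2)"
proof -
  obtain E where E: "E > 0" and unbalanced: "\<And>a b. 10 * a \<le> a + b \<or> 10 * b \<le> a + b \<Longrightarrow>
      cmod (c_coeff ((real a + real b) / 2) ((real b - real a) / 2)) \<le> E * (1 + (real a + real b) / 2) powr (-1/2)"
    using unbalanced_c_coeff_bound by blast
  have "(1 + (real a + real b) / 2) powr (-1/2) \<le> bound_term ((real a + real b) / 2) ((real b - real a) / 2)"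
    for a b by (rule powr_neg_half_le_bound_term) (simp add: abs_le_iff)
  then show ?thesis using E unbalanced by (meson mult_left_mono order_trans less_imp_le)
qed

lemma Nats_half_sum_difference:
  fixes l p :: real
  assumes "l - p \<in> \<nat>" "l + p \<in> \<nat>"
  obtains a b :: nat where "l = (real a + real b) / 2" "p = (real b - real a) / 2"
proof -
  obtain a where a: "l - p = real a" using assms(1) by (auto elim: Nats_cases)
  obtain b where b: "l + p = real b" using assms(2) by (auto elim: Nats_cases)
  have "l = ((l - p) + (l + p)) / 2" "p = ((l + p) - (l - p)) / 2" by simp_all
  then show ?thesis unfolding a b by (rule that)
qed

theorem propositionA5:
  shows "\<exists>C::real. \<forall>l p::real. l - p \<in> \<nat> \<and> l + p \<in> \<nat> \<longrightarrow>
           cmod (c_coeff l p) \<le> C * bound_term l p"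
proof -
  obtain E where "E > 0" and unbalanced: "\<And>a b. 10 * a \<le> a + b \<or> 10 * b \<le> a + b \<Longrightarrow>
      cmod (c_coeff ((real a + real b) / 2) ((real b - real a) / 2))
        \<le> E * bound_term ((real a + real b) / 2) ((real b - real a) / 2)"
    using unbalanced_c_coeff_le_bound_term by blast
  have "cmod (c_coeff l p) \<le> max 36 E * bound_term l p" if lp: "l - p \<in> \<nat>" "l + p \<in> \<nat>" for l p :: real
  proof -
    obtain a b where l: "l = (real a + real b) / 2" and p: "p = (real b - real a) / 2"
      using lp by (rule Nats_half_sum_difference)
    have "cmod (c_coeff l p) \<le> 36 * bound_term l p \<or> cmod (c_coeff l p) \<le> E * bound_term l p"
      unfolding l p using balanced_c_coeff_le_bound_term[of a b] unbalanced[of a b] by linarith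
    moreover have "0 \<le> bound_term l p" unfolding bound_term_def by simp
    then have "36 * bound_term l p \<le> max 36 E * bound_term l p" "E * bound_term l p \<le> max 36 E * bound_term l p"
      by (intro mult_right_mono; simp)+
    ultimately show ?thesis by linarith
  qed
  then show ?thesis by blast
qed

end
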